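(* Let $d,r\ge2$. The subset $\mathcal P=\bigcap_{n\in S}\mathcal H_{W(n),-1}\subseteq(\mathcal M_{d,r})_{\mathbb R}$ is compact, and for every $i\in[r]$ its chart image $\pi_i(\mathcal P)\subseteq M^{(i)}_{d,r}\otimes\mathbb R$ is an integral (lattice) polytope. Consequently $\mathcal P$ is an integral PL polytope which is chart-Gorenstein–Fano.
   Context: The polyptych lattice $\mathcal M_{d,r}$ over $\mathbb Z$: coordinates $(\mathbf u,\mathbf w)\in\mathbb Z^d\times\mathbb Z^r$; charts $M^{(i)}_{d,r}=\{w_i=0\}$, $i\in[r]$; mutations $\mu_{i,i+1}(\mathbf u,\mathbf w)=(\mathbf u,w_1,\dots,w_{i-1},\min_ju_j-\sum_kw_k,0,w_{i+2},\dots,w_r)$, others by composition/inversion; $(\mathcal M_{d,r})_{\mathbb R}$ uses the same formulas on $\mathbb R$-coordinates, with chart maps $\pi_i$. $\mathbf 1$ is the all-ones vector, $\varepsilon_j$ standard basis vectors. $\mathbb M_{d,r}=\{(\mathbf u,\mathbf w):\min_ju_j=0\}$ is identified with elements via $\varphi_i(\mathbf u,\mathbf w)=(\mathbf u+\langle\mathbf 1,\mathbf w\rangle\mathbf 1,\mathbf w)$ with $i$-th $\mathbf w$-coordinate set to $0$; $\varphi_i^{-1}(\mathbf u,\mathbf w)=(\mathbf u-\min(\mathbf u)\mathbf 1,\mathbf w+(\min(\mathbf u)-\langle\mathbf 1,\mathbf w\rangle)\varepsilon_i)$, which makes sense over $\mathbb R$. $T_{d,r}=\{(\mathbf a,\mathbf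 b)\in\mathbb Z^d\times\mathbb Z^r:\sum_ja_j=\min_ib_i\}$; for $(\mathbf a,\mathbf b)\in T_{d,r}$ the point $f_{\mathbf a,\mathbf b}$ of $\mathcal M_{d,r}$ is given in chart $i$ (over $\mathbb R$) by $x\mapsto\langle\mathbf a,\mathbf u'\rangle+\langle\mathbf b,\mathbf w'\rangle$ where $(\mathbf u',\mathbf w')=\varphi_i^{-1}(x)$. The same constructions with $d,r$ swapped give $\mathcal M_{r,d}$, $\mathbb M_{r,d}$, charts $M^{(i)}_{r,d}$ (coordinates $(\mathbf y,\mathbf z)\in\mathbb Z^r\times\mathbb Z^d$, $z_i=0$), maps $\varphi_i$. For $n=(\mathbf y,\mathbf z)\in\mathbb M_{r,d}$ put $\mathsf v_{r,d}(n)=(\mathbf z,\mathbf y+\langle\mathbf 1,\mathbf z\rangle\mathbf 1)\in T_{d,r}$ and $W(n)=f_{\mathsf v_{r,d}(n)}$, a point of $\mathcal M_{d,r}$. PL half-space: $\mathcal H_{p,a}=\{m\in(\mathcal M_{d,r})_{\mathbb R}:p(m)\ge a\}$. Let $S^{(1)}\subseteq M^{(1)}_{r,d}$ be $\{(\varepsilon_1,\mathbf 0),\dots,(\varepsilon_r,\mathbf 0),\pm(\mathbf 1,\mathbf 0),\pm(\mathbf 1,\varepsilon_2),\dots,\pm(\mathbf 1,\varepsilon_d)\}$ (first component in $\mathbb Z^r$, second in $\mathbb Z^d$), and $S=\varphi_1^{-1}(S^{(1)})\subseteq\mathbb M_{r,d}$. A PL polytope is a compact finite intersection of PL half-spaces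 (with integer points and parameters); it is integral if every chart image is a lattice polytope; it is chart-Gorenstein–Fano if it is integral and of the form $\bigcap_i\mathcal H_{p_i,-1}$ with $p_i$ points. *)

theory Defs
  imports "HOL-Analysis.Analysis"
begin

text \<open>Coordinates of (M_{d,r})_R: pairs (u,w) in R^d x R^r, index sets [d], [r]
  rendered as finite types 'd, 'r. The same (polymorphic) definitions serve for M_{r,d}.\<close>

definition vmin :: "real^'n \<Rightarrow> real" where
  "vmin u = Min (range (\<lambda>j. u $ j))"

definition vsum :: "real^'n \<Rightarrow> real" where
  "vsum w = (\<Sum>k\<in>UNIV. w $ k)"

definition ones :: "real^'n" where
  "ones = (\<chi> j. 1)"

definition MMR :: "((real^'a) \<times> (real^'b)) set" where
  "MMR = {(u, w). vmin u = 0}"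

definition chart :: "'b \<Rightarrow> ((real^'a) \<times> (real^'b)) set" where
  "chart i = {(u, w). w $ i = 0}"

text \<open>phi_i (= chart map pi_i) and its inverse.\<close>
definition phi :: "'b \<Rightarrow> (real^'a) \<times> (real^'b) \<Rightarrow> (real^'a) \<times> (real^'b)" where
  "phi i m = (case m of (u, w) \<Rightarrow> (u + vsum w *\<^sub>R ones, (\<chi> k. if k = i then 0 else w $ k)))"

definition phi_inv :: "'b \<Rightarrow> (real^'a) \<times> (real^'b) \<Rightarrow> (real^'a) \<times> (real^'b)" where
  "phi_inv i x = (case x of (u, w) \<Rightarrow>
      (u - vmin u *\<^sub>R ones, w + (\<chi> k. if k = i then vmin u - vsum w else 0)))"

definition is_int_vec :: "real^'n \<Rightarrow> bool" where
  "is_int_vec v \<longleftrightarrow> (\<forall>j. v $ j \<in> \<int>)"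

definition int_pt :: "(real^'a) \<times> (real^'b) \<Rightarrow> bool" where
  "int_pt m \<longleftrightarrow> is_int_vec (fst m) \<and> is_int_vec (snd m)"

definition Tset :: "((real^'a) \<times> (real^'b)) set" where
  "Tset = {(a, b). int_pt (a, b) \<and> vsum a = vmin b}"

definition f_chart :: "(real^'a) \<times> (real^'b) \<Rightarrow> 'b \<Rightarrow> (real^'a) \<times> (real^'b) \<Rightarrow> real" where
  "f_chart p i x = (case phi_inv i x of (u', w') \<Rightarrow> fst p \<bullet> u' + snd p \<bullet> w')"

definition Hs :: "(real^'a) \<times> (real^'b) \<Rightarrow> real \<Rightarrow> ((real^'a) \<times> (real^'b)) set" where
  "Hs p c = {m \<in> MMR. \<forall>i. f_chart p i (phi i m) \<ge> c}"

definition v_rd :: "(real^'r) \<times> (real^'d) \<Rightarrow> (real^'d) \<times> (real^'r)" where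
  "v_rd n = (case n of (y, z) \<Rightarrow> (z, y + vsum z *\<^sub>R ones))"

text \<open>The index 1 of [d] is the least element of the finite linear order 'd.\<close>
definition first_idx :: "'d::{finite,linorder}" where
  "first_idx = Min UNIV"

definition S1 :: "((real^'r) \<times> (real^'d::{finite,linorder})) set" where
  "S1 = {(axis j 1, 0) | j. True}
      \<union> {(ones, 0), - (ones, 0)}
      \<union> {(ones, axis k 1) | k. k \<noteq> first_idx}
      \<union> {- (ones, axis k 1) | k. k \<noteq> first_idx}"

definition Sset :: "((real^'r) \<times> (real^'d::{finite,linorder})) set" where
  "Sset = phi_inv first_idx ` S1"

definition Ppoly :: "((real^'d::{finite,linorder}) \<times> (real^'r)) set" where
  "Ppoly = {m \<in> MMR. \<forall>n\<in>(Sset :: ((real^'r) \<times> (real^'d::{finite,linorder})) set). m \<in> Hs (v_rd n) (-1)}"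

definition lattice_polytope :: "((real^'a) \<times> (real^'b)) set \<Rightarrow> bool" where
  "lattice_polytope Q \<longleftrightarrow> (\<exists>V. finite V \<and> (\<forall>v\<in>V. int_pt v) \<and> Q = convex hull V)"

definition PL_polytope :: "((real^'a) \<times> (real^'b)) set \<Rightarrow> bool" where
  "PL_polytope Q \<longleftrightarrow> compact Q \<and>
     (\<exists>F. finite F \<and> (\<forall>(p, c)\<in>F. p \<in> Tset \<and> c \<in> \<int>) \<and>
          Q = MMR \<inter> \<Inter>{Hs p c | p c. (p, c) \<in> F})"

definition integral_PL_polytope :: "((real^'a) \<times> (real^'b)) set \<Rightarrow> bool" where
  "integral_PL_polytope Q \<longleftrightarrow> PL_polytope Q \<and> (\<forall>i. lattice_polytope (phi i ` Q))"

definition chart_GF :: "((real^'a) \<times> (real^'b)) set \<Rightarrow> bool" where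
  "chart_GF Q \<longleftrightarrow> integral_PL_polytope Q \<and>
     (\<exists>F. finite F \<and> F \<subseteq> Tset \<and> Q = MMR \<inter> \<Inter>{Hs p (-1) | p. p \<in> F})"

end

theory Submission
  imports Defs
begin

text \<open>The set S consists of the points (e_j, 0) and (0, e_k), (0, -e_k) of MM_{r,d}, so
  P is cut out by min u = 0, w_j \<ge> -1 and |u_k + sum w| \<le> 1; this set is closed and bounded.
  Its image in chart i is the polyhedron w_i = 0, |x_k| \<le> 1, w_j \<ge> -1, sum w \<le> x_k + 1,
  all of whose constraints have integer bounds. At a non-integral point there is a direction
  keeping every tight constraint tight: two fractional w-coordinates are traded against each
  other; a single fractional w_j (which makes sum w fractional) is moved together with all
  fractional x_k; if w is integral, a fractional x_k is moved alone. Hence the vertices are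
  integral, and Krein-Milman makes every chart image a lattice polytope.\<close>

lemma vmin_le: "vmin u \<le> u $ k"
  unfolding vmin_def by (rule Min_le) auto

lemma vmin_attained:
  obtains k where "u $ k = vmin u"
proof -
  have "vmin u \<in> range (\<lambda>j. u $ j)" unfolding vmin_def by (rule Min_in) auto
  then show ?thesis using that by auto
qed

lemma vmin_eqI: "(\<And>k. c \<le> u $ k) \<Longrightarrow> u $ m = c \<Longrightarrow> vmin u = c"
  by (metis vmin_attained vmin_le order_antisym)

lemma vmin_eq_0_iff: "vmin u = 0 \<longleftrightarrow> (\<forall>k. 0 \<le> u $ k) \<and> (\<exists>k. u $ k = 0)"
  by (metis vmin_eqI vmin_attained vmin_le)

lemma ones_nth [simp]: "ones $ k = 1"
  by (simp add: ones_def)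

lemma vmin_add_scaleR_ones: "vmin (u + c *\<^sub>R ones) = vmin u + c"
  by (rule vmin_attained[of u]) (auto intro!: vmin_eqI simp: vmin_le)

lemma vmin_scaleR_ones: "vmin (c *\<^sub>R ones) = c"
  by (intro vmin_eqI) auto

lemma vmin_ones: "vmin ones = 1"
  using vmin_scaleR_ones[of 1] by simp

lemma vmin_minus_ones: "vmin (- ones) = -1"
  using vmin_scaleR_ones[of "-1"] by (simp add: ones_def vec_eq_iff)

lemma vmin_axis:
  assumes "CARD('n::finite) \<ge> 2"
  shows "vmin (axis (j::'n) (1::real)) = 0"
proof -
  have "\<exists>k :: 'n. k \<noteq> j"
  proof (rule ccontr)
    assume "\<nexists>k. k \<noteq> j"
    then have "UNIV = {j}" by auto
    then have "CARD('n) = card {j}" by (simp only:)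
    with assms show False by simp
  qed
  then obtain k where "k \<noteq> j" ..
  then show ?thesis by (intro vmin_eqI[where m=k]) (auto simp: axis_def)
qed

lemma axis_nth_if: "axis i x $ j = (if j = i then x else 0)"
  by (simp add: axis_def)

lemma vsum_add: "vsum (a + b) = vsum a + vsum b"
  by (simp add: vsum_def sum.distrib)

lemma vsum_diff: "vsum (a - b) = vsum a - vsum b"
  by (simp add: vsum_def sum_subtractf)

lemma vsum_scaleR: "vsum (c *\<^sub>R a) = c * vsum a"
  by (simp add: vsum_def sum_distrib_left)

lemma vsum_uminus: "vsum (- a) = - vsum a"
  by (simp add: vsum_def sum_negf)

lemma vsum_0 [simp]: "vsum 0 = 0"
  by (simp add: vsum_def)

lemma vsum_axis: "vsum (axis k c) = c"
  by (simp add: vsum_def axis_def)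

lemma vsum_remove: "vsum w = w $ j + (\<Sum>l\<in>UNIV - {j}. w $ l)"
  unfolding vsum_def by (simp add: sum.remove[of UNIV j])

lemma vsum_Ints: "(\<And>j. w $ j \<in> \<int>) \<Longrightarrow> vsum w \<in> \<int>"
  unfolding vsum_def by (intro Ints_sum) auto

lemma vsum_ge:
  assumes "\<And>l. -1 \<le> w $ l"
  shows "w $ j - real (CARD('n::finite) - 1) \<le> vsum (w :: real^'n)"
proof -
  have "(\<Sum>l\<in>UNIV - {j}. -1) \<le> (\<Sum>l\<in>UNIV - {j}. w $ l)"
    using assms by (intro sum_mono) auto
  then show ?thesis
    using vsum_remove[of w j] by (simp add: card_Diff_singleton)
qed

lemma vsum_zero_at: "vsum (\<chi> k. if k = i then 0 else w $ k) = vsum w - w $ i"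
  using vsum_remove[of w i] vsum_remove[of "\<chi> k. if k = i then 0 else w $ k" i] by simp

lemma inner_ones: "ones \<bullet> w = vsum w" "w \<bullet> ones = vsum w"
  by (simp_all add: ones_def vsum_def inner_vec_def)

lemma phi_inv_phi:
  assumes "vmin u = 0"
  shows "phi_inv i (phi i (u, w)) = (u, w)"
  by (simp add: phi_def phi_inv_def vsum_zero_at vmin_add_scaleR_ones assms vec_eq_iff)

lemma mem_Hs_iff: "(u, w) \<in> Hs p c \<longleftrightarrow> vmin u = 0 \<and> c \<le> fst p \<bullet> u + snd p \<bullet> w"
  by (auto simp: Hs_def MMR_def f_chart_def phi_inv_phi)

lemma Sset_eq:
  assumes "CARD('r::finite) \<ge> 2"
  shows "(Sset :: ((real^'r) \<times> (real^'d::{finite,linorder})) set) =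
     range (\<lambda>j. (axis j 1, 0)) \<union> range (\<lambda>k. (0, axis k 1)) \<union> range (\<lambda>k. (0, - axis k 1))"
proof -
  let ?f = "first_idx :: 'd"
  have range_eq: "range g = insert (g ?f) (g ` {k. k \<noteq> ?f})"
    for g :: "'d \<Rightarrow> (real^'r) \<times> (real^'d::{finite,linorder})"
    by blast
  have axis_fixed: "phi_inv ?f (axis j 1, 0) = (axis j 1, 0)" for j :: 'r
    using vmin_axis[OF assms, of j] by (simp add: phi_inv_def vec_eq_iff)
  \<comment> \<open>S1 lists (1, 0) and -(1, 0) for (1, e_1) and -(1, e_1): w_1 is absent in chart 1.\<close>
  have ones_first: "phi_inv ?f (c *\<^sub>R ones :: real^'r, 0) = (0, c *\<^sub>R axis ?f 1)" for c
    by (simp add: phi_inv_def vmin_scaleR_ones vec_eq_iff axis_nth_if)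
  have ones_axis: "phi_inv ?f (c *\<^sub>R ones :: real^'r, c *\<^sub>R axis k 1) = (0, c *\<^sub>R axis k 1)"
    if "k \<noteq> ?f" for c k
    using that by (simp add: phi_inv_def vsum_axis vsum_scaleR vmin_scaleR_ones vec_eq_iff axis_nth_if)
  show ?thesis
    using axis_fixed ones_first[of 1] ones_first[of "-1"] ones_axis[of _ 1] ones_axis[of _ "-1"]
    unfolding Sset_def S1_def range_eq[of "\<lambda>k. (0, axis k 1)"] range_eq[of "\<lambda>k. (0, - axis k 1)"]
    by (simp add: full_SetCompr_eq setcompr_eq_image image_Un image_image) (force simp: image_iff)
qed

lemma v_rd_Sset:
  assumes "CARD('r::finite) \<ge> 2"
  shows "v_rd ` (Sset :: ((real^'r) \<times> (real^'d::{finite,linorder})) set) =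
     range (\<lambda>j. (0, axis j 1)) \<union> range (\<lambda>k. (axis k 1, ones)) \<union> range (\<lambda>k. (- axis k 1, - ones))"
  unfolding Sset_eq[OF assms] image_Un image_image
  by (simp add: v_rd_def vsum_axis vsum_uminus)

definition P_coords :: "((real^'a::finite) \<times> (real^'b::finite)) set" where
  "P_coords = {(u, w). vmin u = 0 \<and> (\<forall>j. -1 \<le> w $ j) \<and> (\<forall>k. \<bar>u $ k + vsum w\<bar> \<le> 1)}"

lemma Ppoly_eq_P_coords:
  assumes "CARD('r::finite) \<ge> 2"
  shows "(Ppoly :: ((real^'d::{finite,linorder}) \<times> (real^'r)) set) = P_coords"
proof (intro set_eqI, clarify)
  fix u :: "real^'d::{finite,linorder}" and w :: "real^'r"
  have "(u, w) \<in> Ppoly \<longleftrightarrow> vmin u = 0 \<and>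
      (\<forall>p \<in> v_rd ` (Sset :: ((real^'r) \<times> (real^'d::{finite,linorder})) set). (u, w) \<in> Hs p (-1))"
    by (simp add: Ppoly_def MMR_def)
  also have "\<dots> \<longleftrightarrow>
      vmin u = 0 \<and> (\<forall>j. -1 \<le> w $ j) \<and> (\<forall>k. -1 \<le> u $ k + vsum w \<and> -1 \<le> - (u $ k + vsum w))"
    unfolding v_rd_Sset[OF assms] by (auto simp: ball_Un mem_Hs_iff inner_axis' inner_ones)
  moreover have "\<bar>t\<bar> \<le> 1 \<longleftrightarrow> -1 \<le> t \<and> -1 \<le> - t" for t :: real
    by linarith
  ultimately show "(u, w) \<in> Ppoly \<longleftrightarrow> (u, w) \<in> P_coords"
    unfolding P_coords_def by (simp only: mem_Collect_eq prod.case)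
qed

lemma closed_P_coords: "closed (P_coords :: ((real^'a::finite) \<times> (real^'b::finite)) set)"
proof -
  have "P_coords = (\<Union>k0. {z :: (real^'a) \<times> (real^'b). fst z $ k0 = 0}
      \<inter> {z. \<forall>k. 0 \<le> fst z $ k} \<inter> {z. \<forall>j. -1 \<le> snd z $ j}
      \<inter> {z. \<forall>k. \<bar>fst z $ k + vsum (snd z)\<bar> \<le> 1})"
    by (auto simp: P_coords_def vmin_eq_0_iff)
  also have "closed \<dots>"
    unfolding vsum_def
    by (intro closed_UN closed_Int closed_Collect_all closed_Collect_le closed_Collect_eq finite ballI
        continuous_intros)
  finally show ?thesis .
qed

lemma bounded_P_coords: "bounded (P_coords :: ((real^'a::finite) \<times> (real^'b::finite)) set)"
proof -
  let ?C = "real CARD('b)"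
  have "(P_coords :: ((real^'a) \<times> (real^'b)) set)
      \<subseteq> cbox (0, - ones) (2 *\<^sub>R ones, ?C *\<^sub>R ones)"
  proof
    fix z :: "(real^'a) \<times> (real^'b)"
    assume "z \<in> P_coords"
    then obtain u w where z: "z = (u, w)" and "vmin u = 0" and w_ge: "\<forall>j. -1 \<le> w $ j"
      and x_abs: "\<forall>k. \<bar>u $ k + vsum w\<bar> \<le> 1"
      by (auto simp: P_coords_def)
    then obtain k0 where "u $ k0 = 0" and u_ge: "\<forall>k. 0 \<le> u $ k"
      by (auto simp: vmin_eq_0_iff)
    then have vsum_abs: "\<bar>vsum w\<bar> \<le> 1"
      using x_abs[rule_format, of k0] by simp
    have "u $ k \<le> 2" for k
      using x_abs[rule_format, of k] vsum_abs by linarith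
    moreover have "w $ j \<le> ?C" for j
      using vsum_ge[of w j] w_ge vsum_abs by (simp add: of_nat_diff)
    ultimately show "z \<in> cbox (0, - ones) (2 *\<^sub>R ones, ?C *\<^sub>R ones)"
      using z u_ge w_ge by (auto simp: mem_box_cart)
  qed
  then show ?thesis
    using bounded_cbox bounded_subset by blast
qed

lemma compact_P_coords: "compact (P_coords :: ((real^'a::finite) \<times> (real^'b::finite)) set)"
  using closed_P_coords bounded_P_coords compact_eq_bounded_closed by blast

definition Q_chart :: "'b::finite \<Rightarrow> ((real^'a::finite) \<times> (real^'b)) set" where
  "Q_chart i = {(x, w). w $ i = 0 \<and> (\<forall>k. \<bar>x $ k\<bar> \<le> 1) \<and> (\<forall>j. -1 \<le> w $ j)
     \<and> (\<forall>k. vsum w \<le> x $ k + 1)}"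

lemma phi_inv_eq: "phi_inv i (x, w) = (x - vmin x *\<^sub>R ones, w + axis i (vmin x - vsum w))"
  by (simp add: phi_inv_def axis_def)

lemma phi_phi_inv:
  assumes "w $ i = 0"
  shows "phi i (phi_inv i (x, w)) = (x, w)"
  using assms by (simp add: phi_inv_eq phi_def vsum_add vsum_axis vec_eq_iff axis_nth_if)

lemma continuous_on_phi:
  "continuous_on UNIV (phi i :: (real^'a::finite) \<times> (real^'b::finite) \<Rightarrow> _)"
proof -
  have phi_eq: "phi i = (\<lambda>z :: (real^'a) \<times> (real^'b).
      (fst z + (\<Sum>k\<in>UNIV. snd z $ k) *\<^sub>R ones, \<chi> k. if k = i then 0 else snd z $ k))"
    by (simp add: fun_eq_iff phi_def vsum_def split: prod.split)
  show ?thesis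
    unfolding phi_eq
  proof (intro continuous_intros)
    show "continuous_on UNIV (\<lambda>z :: (real^'a) \<times> (real^'b). if k = i then 0 else snd z $ k)" for k
      by (cases "k = i") (simp_all add: continuous_intros)
  qed
qed

lemma phi_image_P_coords:
  "phi i ` (P_coords :: ((real^'a::finite) \<times> (real^'b::finite)) set) = Q_chart i" (is "?P = ?Q")
proof
  show "?P \<subseteq> ?Q"
    unfolding image_subset_iff
  proof clarify
    fix u :: "real^'a" and w :: "real^'b"
    assume "(u, w) \<in> P_coords"
    then have u_ge: "\<forall>k. 0 \<le> u $ k" and w_ge: "\<forall>j. -1 \<le> w $ j"
      and "\<forall>k. \<bar>u $ k + vsum w\<bar> \<le> 1"
      by (auto simp: P_coords_def vmin_eq_0_iff)
    moreover have "vsum w - w $ i \<le> u $ k + vsum w + 1" for k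
      using u_ge[rule_format, of k] w_ge[rule_format, of i] by linarith
    ultimately show "phi i (u, w) \<in> Q_chart i"
      by (simp add: phi_def Q_chart_def vsum_zero_at)
  qed
  show "?Q \<subseteq> ?P"
  proof clarify
    fix x :: "real^'a" and w :: "real^'b"
    assume xw: "(x, w) \<in> Q_chart i"
    then have w_i: "w $ i = 0" and w_ge: "\<forall>j. -1 \<le> w $ j"
      and sum_le: "\<forall>k. vsum w \<le> x $ k + 1"
      by (auto simp: Q_chart_def)
    obtain k0 where "x $ k0 = vmin x"
      by (rule vmin_attained)
    then have "-1 \<le> vmin x - vsum w"
      using sum_le[rule_format, of k0] by simp
    then have "-1 \<le> (w + axis i (vmin x - vsum w)) $ j" for j
      using w_i w_ge by (simp add: axis_nth_if)
    moreover have "vmin (x - vmin x *\<^sub>R ones) = 0"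
      using vmin_add_scaleR_ones[of x "- vmin x"] by simp
    ultimately have "phi_inv i (x, w) \<in> P_coords"
      using xw by (simp add: P_coords_def Q_chart_def phi_inv_eq vsum_add vsum_axis)
    then show "(x, w) \<in> ?P"
      using phi_phi_inv[OF w_i] by (metis image_eqI)
  qed
qed

lemma compact_Q_chart: "compact (Q_chart i :: ((real^'a::finite) \<times> (real^'b::finite)) set)"
  unfolding phi_image_P_coords[symmetric]
  using compact_P_coords continuous_on_phi continuous_on_subset
  by (blast intro: compact_continuous_image)

lemma polyhedron_Q_chart: "polyhedron (Q_chart i :: ((real^'a::finite) \<times> (real^'b::finite)) set)"
proof -
  have "Q_chart i = {z :: (real^'a) \<times> (real^'b). (0, axis i 1) \<bullet> z = 0}
      \<inter> \<Inter>(range (\<lambda>k. {z. (axis k 1, 0) \<bullet> z \<le> 1}))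
      \<inter> \<Inter>(range (\<lambda>k. {z. (axis k 1, 0) \<bullet> z \<ge> -1}))
      \<inter> \<Inter>(range (\<lambda>j. {z. (0, axis j 1) \<bullet> z \<ge> -1}))
      \<inter> \<Inter>(range (\<lambda>k. {z. (- axis k 1, ones) \<bullet> z \<le> 1}))"
    by (auto simp: Q_chart_def inner_axis' inner_ones inner_minus_left abs_le_iff algebra_simps)
  also have "polyhedron \<dots>"
    by (intro polyhedron_Int polyhedron_Inter polyhedron_hyperplane finite_imageI finite)
      (auto simp: polyhedron_halfspace_le polyhedron_halfspace_ge)
  finally show ?thesis .
qed

lemma eventually_Ints_bound_perturb:
  fixes c a t :: real
  assumes "c \<in> \<int>" and "c \<le> a" and "a \<in> \<int> \<Longrightarrow> t = 0"
  shows "\<forall>\<^sub>F e in at_right 0. c \<le> a + e * t \<and> c \<le> a - e * t"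
proof (cases "t = 0")
  case False
  then have "c < a"
    using assms by (cases "c = a") auto
  moreover have "((\<lambda>e. a + e * t) \<longlongrightarrow> a) (at_right 0)" "((\<lambda>e. a - e * t) \<longlongrightarrow> a) (at_right 0)"
    by (auto intro!: tendsto_eq_intros)
  ultimately have "\<forall>\<^sub>F e in at_right 0. c < a + e * t" "\<forall>\<^sub>F e in at_right 0. c < a - e * t"
    by (auto dest: order_tendstoD(1))
  then show ?thesis
    by eventually_elim auto
qed (use assms in simp)

text \<open>All bounds defining Q_chart are integers, so a constraint can only be tight where the
  constrained quantity is an integer; moving only the other quantities keeps small steps inside.\<close>

lemma eventually_Q_chart_perturb:
  fixes x dx :: "real^'a::finite" and w dw :: "real^'b::finite"
  assumes xw: "(x, w) \<in> Q_chart i" and "dw $ i = 0"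
    and x_Ints: "\<And>k. x $ k \<in> \<int> \<Longrightarrow> dx $ k = 0"
    and w_Ints: "\<And>j. w $ j \<in> \<int> \<Longrightarrow> dw $ j = 0"
    and slack_Ints: "\<And>k. x $ k - vsum w \<in> \<int> \<Longrightarrow> dx $ k = vsum dw"
  shows "\<forall>\<^sub>F e in at_right 0. (x + e *\<^sub>R dx, w + e *\<^sub>R dw) \<in> Q_chart i
    \<and> (x - e *\<^sub>R dx, w - e *\<^sub>R dw) \<in> Q_chart i"
proof -
  from xw have "w $ i = 0" and x_abs: "\<forall>k. \<bar>x $ k\<bar> \<le> 1" and w_ge: "\<forall>j. -1 \<le> w $ j"
    and sum_le: "\<forall>k. vsum w \<le> x $ k + 1"
    by (auto simp: Q_chart_def)
  have slack_ge: "-1 \<le> x $ k - vsum w" for k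
    using sum_le[rule_format, of k] by linarith
  have "\<forall>\<^sub>F e in at_right 0. \<forall>k. -1 \<le> x $ k + e * dx $ k \<and> -1 \<le> x $ k - e * dx $ k"
    using x_abs x_Ints by (intro eventually_all_finite allI eventually_Ints_bound_perturb)
      (auto simp: abs_le_iff)
  moreover have "\<forall>\<^sub>F e in at_right 0. \<forall>k.
      -1 \<le> - x $ k + e * - dx $ k \<and> -1 \<le> - x $ k - e * - dx $ k"
    using x_abs x_Ints by (intro eventually_all_finite allI eventually_Ints_bound_perturb)
      (auto simp: abs_le_iff)
  moreover have "\<forall>\<^sub>F e in at_right 0. \<forall>j. -1 \<le> w $ j + e * dw $ j \<and> -1 \<le> w $ j - e * dw $ j"
    using w_ge w_Ints by (intro eventually_all_finite allI eventually_Ints_bound_perturb) auto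
  moreover have "\<forall>\<^sub>F e in at_right 0. \<forall>k.
      -1 \<le> (x $ k - vsum w) + e * (dx $ k - vsum dw)
      \<and> -1 \<le> (x $ k - vsum w) - e * (dx $ k - vsum dw)"
    using slack_ge slack_Ints by (intro eventually_all_finite allI eventually_Ints_bound_perturb) auto
  ultimately show ?thesis
  proof eventually_elim
    case (elim e)
    then show ?case
      using \<open>w $ i = 0\<close> \<open>dw $ i = 0\<close>
      by (auto simp: Q_chart_def vsum_add vsum_diff vsum_scaleR abs_le_iff algebra_simps)
  qed
qed

lemma not_extreme_point_of_two_sided:
  fixes z d :: "'a::real_vector"
  assumes "d \<noteq> 0" and "\<forall>\<^sub>F e in at_right 0. z + e *\<^sub>R d \<in> S \<and> z - e *\<^sub>R d \<in> S"
  shows "\<not> z extreme_point_of S"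
proof -
  obtain e :: real where "0 < e" and in_S: "z - e *\<^sub>R d \<in> S" "z + e *\<^sub>R d \<in> S"
    using eventually_happens'[OF trivial_limit_at_right_real
        eventually_conj[OF eventually_at_right_less assms(2)]]
    by auto
  have "(z + e *\<^sub>R d) - (z - e *\<^sub>R d) = (2 * e) *\<^sub>R d"
    by (simp add: scaleR_2 flip: scaleR_scaleR)
  moreover have "(2 * e) *\<^sub>R d \<noteq> 0"
    using \<open>0 < e\<close> assms(1) by simp
  ultimately have "z - e *\<^sub>R d \<noteq> z + e *\<^sub>R d"
    by (metis diff_self)
  moreover have "midpoint (z - e *\<^sub>R d) (z + e *\<^sub>R d) = z"
    by (simp add: midpoint_def algebra_simps flip: scaleR_left_distrib)
  ultimately show ?thesis
    using in_S midpoint_in_open_segment unfolding extreme_point_of_def by metis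
qed

lemma Ints_diff_iff_left: "b \<in> \<int> \<Longrightarrow> a - b \<in> \<int> \<longleftrightarrow> (a :: 'a::ring_1) \<in> \<int>"
  using Ints_add[of "a - b" b] Ints_diff[of a b] by auto

lemma Ints_diff_iff_right: "a \<in> \<int> \<Longrightarrow> a - b \<in> \<int> \<longleftrightarrow> (b :: 'a::ring_1) \<in> \<int>"
  using Ints_diff[of a "a - b"] Ints_diff[of a b] by auto

lemma fractional_direction:
  fixes x :: "real^'a::finite" and w :: "real^'b::finite"
  assumes "\<not> int_pt (x, w)" and "w $ i = 0"
  obtains dx dw where "(dx, dw) \<noteq> 0" and "dw $ i = 0"
    and "\<And>k. x $ k \<in> \<int> \<Longrightarrow> dx $ k = 0" and "\<And>j. w $ j \<in> \<int> \<Longrightarrow> dw $ j = 0"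
    and "\<And>k. x $ k - vsum w \<in> \<int> \<Longrightarrow> dx $ k = vsum dw"
proof -
  consider (two) j1 j2 where "j1 \<noteq> j2" "w $ j1 \<notin> \<int>" "w $ j2 \<notin> \<int>"
    | (one) j0 where "w $ j0 \<notin> \<int>" "\<And>j. j \<noteq> j0 \<Longrightarrow> w $ j \<in> \<int>"
    | (none) "\<And>j. w $ j \<in> \<int>"
    by (metis (full_types))
  then show ?thesis
  proof cases
    case two
    show ?thesis
      by (rule that[of 0 "axis j1 1 - axis j2 1"])
        (use two assms(2) in
          \<open>auto simp: vec_eq_iff axis_nth_if vsum_diff vsum_axis zero_prod_def\<close>)
  next
    case one
    have "(\<Sum>j\<in>UNIV - {j0}. w $ j) \<in> \<int>"
      using one(2) by (intro Ints_sum) auto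
    then have "vsum w \<notin> \<int>"
      using one(1) vsum_remove[of w j0] Ints_diff_iff_left[of _ "vsum w"] by auto
    then have x_frac: "x $ k \<notin> \<int>" if "x $ k - vsum w \<in> \<int>" for k
      using that Ints_diff_iff_right by blast
    have "j0 \<noteq> i"
      using one(1) assms(2) by auto
    show ?thesis
    proof (rule that[of "\<chi> k. if x $ k \<in> \<int> then 0 else 1" "axis j0 1"])
      show "(\<chi> k. if x $ k \<in> \<int> then 0 else 1, axis j0 (1::real)) \<noteq> 0"
        by (simp add: zero_prod_def axis_eq_0_iff)
      show "axis j0 1 $ i = 0"
        using \<open>j0 \<noteq> i\<close> by (simp add: axis_nth_if)
      show "axis j0 1 $ j = 0" if "w $ j \<in> \<int>" for j
        using that one(1) by (auto simp: axis_nth_if)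
      show "(\<chi> k. if x $ k \<in> \<int> then 0 else 1) $ k = vsum (axis j0 (1::real))"
        if "x $ k - vsum w \<in> \<int>" for k
        using x_frac[OF that] by (simp add: vsum_axis)
    qed simp
  next
    case none
    then obtain k0 where "x $ k0 \<notin> \<int>"
      using assms(1) by (auto simp: int_pt_def is_int_vec_def)
    moreover have "vsum w \<in> \<int>"
      using none by (rule vsum_Ints)
    ultimately show ?thesis
      by (intro that[of "axis k0 1" 0])
        (auto simp: vec_eq_iff axis_nth_if zero_prod_def Ints_diff_iff_left)
  qed
qed

lemma int_pt_if_extreme_point_of_Q_chart:
  assumes "z extreme_point_of Q_chart i"
  shows "int_pt z"
proof (rule ccontr)
  assume "\<not> int_pt z"
  obtain x w where z: "z = (x, w)"
    by fastforce
  have xw: "(x, w) \<in> Q_chart i"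
    using assms z by (simp add: extreme_point_of_def)
  then have "w $ i = 0"
    by (simp add: Q_chart_def)
  obtain dx dw where "(dx, dw) \<noteq> 0" and "dw $ i = 0"
    and "\<And>k. x $ k \<in> \<int> \<Longrightarrow> dx $ k = 0" and "\<And>j. w $ j \<in> \<int> \<Longrightarrow> dw $ j = 0"
    and "\<And>k. x $ k - vsum w \<in> \<int> \<Longrightarrow> dx $ k = vsum dw"
    using \<open>\<not> int_pt z\<close> \<open>w $ i = 0\<close> unfolding z by (rule fractional_direction) blast
  with xw have "\<forall>\<^sub>F e in at_right 0.
      z + e *\<^sub>R (dx, dw) \<in> Q_chart i \<and> z - e *\<^sub>R (dx, dw) \<in> Q_chart i"
    unfolding z by (simp add: eventually_Q_chart_perturb)
  with \<open>(dx, dw) \<noteq> 0\<close> show False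
    using assms not_extreme_point_of_two_sided by blast
qed

lemma lattice_polytopeI:
  fixes S :: "((real^'a::finite) \<times> (real^'b::finite)) set"
  assumes "compact S" and "polyhedron S" and "\<And>v. v extreme_point_of S \<Longrightarrow> int_pt v"
  shows "lattice_polytope S"
  unfolding lattice_polytope_def
proof (intro exI conjI ballI)
  show "finite {v. v extreme_point_of S}"
    using assms(2) by (rule finite_polyhedron_extreme_points)
  show "S = convex hull {v. v extreme_point_of S}"
    using assms(1,2) by (simp add: Krein_Milman_Minkowski polyhedron_imp_convex)
qed (use assms(3) in blast)

lemma lattice_polytope_Q_chart:
  "lattice_polytope (Q_chart i :: ((real^'a::finite) \<times> (real^'b::finite)) set)"
  using compact_Q_chart polyhedron_Q_chart int_pt_if_extreme_point_of_Q_chart by (rule lattice_polytopeI)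

lemma finite_v_rd_Sset:
  assumes "CARD('r::finite) \<ge> 2"
  shows "finite (v_rd ` (Sset :: ((real^'r) \<times> (real^'d::{finite,linorder})) set))"
  by (simp add: v_rd_Sset[OF assms])

lemma v_rd_Sset_subset_Tset:
  assumes "CARD('r::finite) \<ge> 2"
  shows "v_rd ` (Sset :: ((real^'r) \<times> (real^'d::{finite,linorder})) set) \<subseteq> Tset"
  by (auto simp: v_rd_Sset[OF assms] vmin_axis[OF assms] vmin_ones vmin_minus_ones vsum_axis
      vsum_uminus Tset_def int_pt_def is_int_vec_def axis_nth_if)

theorem mainTheorem18:
  fixes P :: "((real^'d::{finite,linorder}) \<times> (real^'r::finite)) set"
  assumes "CARD('d) \<ge> 2" and "CARD('r) \<ge> 2"
    and "P = Ppoly"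
  shows "compact P
    \<and> (\<forall>i::'r. lattice_polytope (phi i ` P))
    \<and> integral_PL_polytope P
    \<and> chart_GF P"
proof -
  have P_eq: "P = P_coords"
    using assms(3) Ppoly_eq_P_coords[OF assms(2)] by simp
  then have "compact P"
    by (simp add: compact_P_coords)
  moreover have lattice: "\<forall>i::'r. lattice_polytope (phi i ` P)"
    by (simp add: P_eq phi_image_P_coords lattice_polytope_Q_chart)
  define F where "F = v_rd ` (Sset :: ((real^'r) \<times> (real^'d::{finite,linorder})) set)"
  have "finite F" and "F \<subseteq> Tset"
    unfolding F_def using finite_v_rd_Sset v_rd_Sset_subset_Tset assms(2) by blast+
  moreover have P_F: "P = MMR \<inter> \<Inter>{Hs p (-1) | p. p \<in> F}"
    unfolding assms(3) Ppoly_def F_def by blast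
  moreover have "{Hs p c | p c. (p, c) \<in> (\<lambda>p. (p, -1)) ` F} = {Hs p (-1) | p. p \<in> F}"
    by blast
  ultimately have "PL_polytope P"
    unfolding PL_polytope_def
    by (intro conjI exI[of _ "(\<lambda>p. (p, -1)) ` F"]) auto
  then have "integral_PL_polytope P"
    using lattice by (simp add: integral_PL_polytope_def)
  moreover have "chart_GF P"
    unfolding chart_GF_def using \<open>integral_PL_polytope P\<close> \<open>finite F\<close> \<open>F \<subseteq> Tset\<close> P_F by blast
  ultimately show ?thesis
    using \<open>compact P\<close> lattice by blast
qed

end
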